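(* Let $\mathcal{D}(\rho)=p_0\rho+p_1X\rho X+p_2Y\rho Y+p_3Z\rho Z$ and $\mathcal{E}(\rho)=q_0\rho+q_1X\rho X+q_2Y\rho Y+q_3Z\rho Z$ be arbitrary single-qubit Pauli channels. The entanglement-assisted quantum communication capacity over a quantum trajectory is $$Q_{\text{E,Q}}=\frac{C_{\text{E,Q}}}{2}=1+\frac12\Big[H(\alpha)+A_0\log_2A_0+\sum_{k=1}^3A_k^+\log_2A_k^++\sum_{k=1}^3A_k^-\log_2A_k^-\Big],$$ where $A_0=p_0q_0+p_1q_1+p_2q_2+p_3q_3$, $A_1^+=p_0q_1+p_1q_0$, $A_2^+=p_0q_2+p_2q_0$, $A_3^+=p_0q_3+p_3q_0$, $A_1^-=p_2q_3+p_3q_2$, $A_2^-=p_3q_1+p_1q_3$, $A_3^-=p_1q_2+p_2q_1$, $\alpha=A_0+A_1^++A_2^++A_3^+$, and $H(\alpha)=-\alpha\log_2\alpha-(1-\alpha)\log_2(1-\alpha)$.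
   Context: $X,Y,Z$ are Pauli matrices, $\sigma_0=I,\sigma_1=X,\sigma_2=Y,\sigma_3=Z$; $(p_i),(q_i)$ are probability vectors; $|\pm\rangle=(|0\rangle\pm|1\rangle)/\sqrt2$; $0\log_20=0$. For a Pauli channel $\mathcal{N}(\rho)=\sum_ir_i\sigma_i\rho\sigma_i$, the entanglement-assisted classical capacity (superdense coding, pre-shared EPR pair, equiprobable inputs) is $C_E(\mathcal{N})=2+\sum_ir_i\log_2r_i$, and the entanglement-assisted quantum capacity is taken, via the superdense coding/teleportation trade-off, to be $Q_E=C_E/2$. Quantum trajectory: with $D_i=\sqrt{p_i}\sigma_i$, $E_j=\sqrt{q_j}\sigma_j$, the switched channel on data $\rho$ and control $\omega=|+\rangle\langle+|$ is $\sum_{i,j}W_{i,j}(\rho\otimes\omega)W_{i,j}^\dagger$ with $W_{i,j}=E_jD_i\otimes|0\rangle\langle0|+D_iE_j\otimes|1\rangle\langle1|$. Its output has the form $p_+\mathcal{S}_+(\rho)\otimes|+\rangle\langle+|+p_-\mathcal{S}_-(\rho)\otimes|-\rangle\langle-|$ (commuting Kraus pairs go to the $|+\rangle$ branch, anticommuting pairs to the $|-\rangle$ branch), with $\mathcal{S}_\pm$ normalized Pauli channels; $C_{\text{E,Q}}=p_+C_E(\mathcal{S}_+)+p_-C_E(\mathcal{S}_-)$ (a zero-probability branch contributes zero) and $Q_{\text{E,Q}}$ is the corresponding quantum capacity. *)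

theory Defs
  imports "HOL-Analysis.Analysis"
begin

text \<open>Pauli matrices sigma_0 = I, sigma_1 = X, sigma_2 = Y, sigma_3 = Z as 2x2 complex
matrices (rows/columns indexed by the type 2 = {0,1}, i.e. basis |0>, |1>).\<close>

definition pauli :: "nat \<Rightarrow> complex^2^2" where
  "pauli k = (\<chi> r c.
     if k = 1 then (if r = c then 0 else 1)
     else if k = 2 then (if r = c then 0 else if r = 0 then - \<i> else \<i>)
     else if k = 3 then (if r \<noteq> c then 0 else if r = 0 then 1 else -1)
     else (if r = c then 1 else 0))"

definition cmat_scale :: "complex \<Rightarrow> complex^2^2 \<Rightarrow> complex^2^2" where
  "cmat_scale a A = (\<chi> r c. a * A $ r $ c)"

definition pauli_commute :: "nat \<Rightarrow> nat \<Rightarrow> bool" where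
  "pauli_commute i j \<longleftrightarrow> pauli i ** pauli j = pauli j ** pauli i"

definition pauli_prod_idx :: "nat \<Rightarrow> nat \<Rightarrow> nat" where
  "pauli_prod_idx i j = (THE k. k < 4 \<and> (\<exists>a. pauli i ** pauli j = cmat_scale a (pauli k)))"

definition xlog2 :: "real \<Rightarrow> real" where
  "xlog2 x = (if x = 0 then 0 else x * log 2 x)"

definition prob_vec4 :: "(nat \<Rightarrow> real) \<Rightarrow> bool" where
  "prob_vec4 p \<longleftrightarrow> (\<forall>i<4. 0 \<le> p i) \<and> (\<Sum>i<4. p i) = 1"

definition C_E :: "(nat \<Rightarrow> real) \<Rightarrow> real" where
  "C_E r = 2 + (\<Sum>i<4. xlog2 (r i))"

text \<open>Unnormalised weight of sigma_k in the |+> (b = True, commuting pairs) or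
  |-> (b = False, anticommuting pairs) branch of the switched channel output, where the
  Kraus pair (D_i, E_j) = (sqrt p_i sigma_i, sqrt q_j sigma_j) acts on the data as
  a multiple of sigma_i sigma_j (resp. sigma_j sigma_i).\<close>
definition branch_weight :: "bool \<Rightarrow> (nat \<Rightarrow> real) \<Rightarrow> (nat \<Rightarrow> real) \<Rightarrow> nat \<Rightarrow> real" where
  "branch_weight b p q k =
     (\<Sum>(i,j)\<in>{(i,j). i < 4 \<and> j < 4 \<and> pauli_commute i j = b \<and> pauli_prod_idx i j = k}.
        p i * q j)"

definition branch_prob :: "bool \<Rightarrow> (nat \<Rightarrow> real) \<Rightarrow> (nat \<Rightarrow> real) \<Rightarrow> real" where
  "branch_prob b p q =
     (\<Sum>(i,j)\<in>{(i,j). i < 4 \<and> j < 4 \<and> pauli_commute i j = b}. p i * q j)"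

definition branch_channel :: "bool \<Rightarrow> (nat \<Rightarrow> real) \<Rightarrow> (nat \<Rightarrow> real) \<Rightarrow> nat \<Rightarrow> real" where
  "branch_channel b p q k = branch_weight b p q k / branch_prob b p q"

definition branch_cap :: "bool \<Rightarrow> (nat \<Rightarrow> real) \<Rightarrow> (nat \<Rightarrow> real) \<Rightarrow> real" where
  "branch_cap b p q =
     (if branch_prob b p q = 0 then 0 else branch_prob b p q * C_E (branch_channel b p q))"

definition C_EQ :: "(nat \<Rightarrow> real) \<Rightarrow> (nat \<Rightarrow> real) \<Rightarrow> real" where
  "C_EQ p q = branch_cap True p q + branch_cap False p q"

definition Q_EQ :: "(nat \<Rightarrow> real) \<Rightarrow> (nat \<Rightarrow> real) \<Rightarrow> real" where
  "Q_EQ p q = C_EQ p q / 2"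

definition bin_entropy :: "real \<Rightarrow> real" where
  "bin_entropy a = - xlog2 a - xlog2 (1 - a)"

end

(* The Kraus pair (sqrt p_i sigma_i, sqrt q_j sigma_j) lands in the |+> branch exactly when
   sigma_i and sigma_j commute, i.e. i = 0, j = 0 or i = j, and then acts on the data as
   sigma_(i xor j). So the branch weights of S_+ are A_0, A_1^+, A_2^+, A_3^+, those of S_-
   are 0, A_1^-, A_2^-, A_3^-, and the branch probabilities are alpha and 1 - alpha.
   For nonnegative weights w_k of total s, s C_E(w / s) = 2 s + sum_k w_k log2 w_k - s log2 s;
   summing this over both branches gives 2 + H(alpha) + sum A log2 A. *)
theory Submission
  imports Defs
begin

lemma less_4_cases: "(i::nat) < 4 \<Longrightarrow> i = 0 \<or> i = 1 \<or> i = 2 \<or> i = 3"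
  by auto

lemma cmat_eq_iff_entries:
  "(A::complex^2^2) = B \<longleftrightarrow>
     A$1$1 = B$1$1 \<and> A$1$2 = B$1$2 \<and> A$2$1 = B$2$1 \<and> A$2$2 = B$2$2"
  by (auto simp: vec_eq_iff forall_2)

lemma cmat_mult_entry: "((A::complex^2^2) ** B)$r$c = A$r$1 * B$1$c + A$r$2 * B$2$c"
  by (simp add: matrix_matrix_mult_def UNIV_2)

lemma pauli_entries:
  "pauli k $ 1 $ 1 = (if k = 1 \<or> k = 2 then 0 else if k = 3 then -1 else 1)"
  "pauli k $ 1 $ 2 = (if k = 1 then 1 else if k = 2 then \<i> else 0)"
  "pauli k $ 2 $ 1 = (if k = 1 then 1 else if k = 2 then -\<i> else 0)"
  "pauli k $ 2 $ 2 = (if k = 1 \<or> k = 2 then 0 else 1)"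
  by (simp_all add: pauli_def)

lemma pauli_commute_iff:
  "i < 4 \<Longrightarrow> j < 4 \<Longrightarrow> pauli_commute i j \<longleftrightarrow> i = 0 \<or> j = 0 \<or> i = j"
  unfolding pauli_commute_def cmat_eq_iff_entries cmat_mult_entry
  by (elim less_4_cases[elim_format] disjE) (simp_all add: pauli_entries)

lemma xor_less_4: "i < 4 \<Longrightarrow> j < 4 \<Longrightarrow> xor i j < (4::nat)"
  by (elim less_4_cases[elim_format] disjE) simp_all

lemma pauli_mult_proportional:
  assumes "i < 4" "j < 4"
  shows "\<exists>a. a \<noteq> 0 \<and> pauli i ** pauli j = cmat_scale a (pauli (xor i j))"
proof -
  define a where "a = (if i = 0 \<or> j = 0 \<or> i = j then 1
    else if (i, j) \<in> {(1, 2), (2, 3), (3, 1)} then \<i> else - \<i>)"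
  have "pauli i ** pauli j = cmat_scale a (pauli (xor i j))"
    using assms unfolding cmat_eq_iff_entries cmat_mult_entry cmat_scale_def vec_lambda_beta a_def
    by (elim less_4_cases[elim_format] disjE) (simp_all add: pauli_entries)
  moreover have "a \<noteq> 0" by (simp add: a_def)
  ultimately show ?thesis by blast
qed

lemma cmat_scale_pauli_inject:
  assumes "k < 4" "m < 4" "b \<noteq> 0" "cmat_scale a (pauli k) = cmat_scale b (pauli m)"
  shows "k = m"
proof -
  have entry: "a * pauli k $ r $ c = b * pauli m $ r $ c" for r c
    using arg_cong[OF assms(4), of "\<lambda>M. M$r$c"] by (simp add: cmat_scale_def)
  from less_4_cases[OF assms(1)] less_4_cases[OF assms(2)] show ?thesis
    by (elim disjE)
      (use entry[of 1 1] entry[of 1 2] entry[of 2 1] entry[of 2 2] assms(3)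
        in \<open>simp_all add: pauli_entries\<close>)
qed

lemma pauli_prod_idx_eq_xor:
  assumes "i < 4" "j < 4"
  shows "pauli_prod_idx i j = xor i j"
proof -
  obtain a where "a \<noteq> 0" and prod: "pauli i ** pauli j = cmat_scale a (pauli (xor i j))"
    using pauli_mult_proportional[OF assms] by blast
  show ?thesis
    unfolding pauli_prod_idx_def prod
  proof (rule the_equality)
    show "xor i j < 4 \<and> (\<exists>b. cmat_scale a (pauli (xor i j)) = cmat_scale b (pauli (xor i j)))"
      using xor_less_4[OF assms] by blast
  next
    fix k assume "k < 4 \<and> (\<exists>b. cmat_scale a (pauli (xor i j)) = cmat_scale b (pauli k))"
    then show "k = xor i j"
      using cmat_scale_pauli_inject[OF _ xor_less_4[OF assms] \<open>a \<noteq> 0\<close>] by metis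
  qed
qed

lemma sum_lessThan_4:
  fixes f :: "nat \<Rightarrow> 'a::comm_monoid_add"
  shows "(\<Sum>k<4. f k) = f 0 + f 1 + f 2 + f 3"
  by (simp add: eval_nat_numeral add.assoc)

lemma sum_pairs_less_4:
  fixes f :: "nat \<Rightarrow> nat \<Rightarrow> 'a::comm_monoid_add"
  shows "(\<Sum>(i, j)\<in>{(i, j). i < 4 \<and> j < 4 \<and> P i j}. f i j) =
     (\<Sum>i<4. \<Sum>j<4. if P i j then f i j else 0)"
proof -
  have "{(i, j). i < 4 \<and> j < 4 \<and> P i j} = {x \<in> {..<4::nat} \<times> {..<4::nat}. P (fst x) (snd x)}"
    by auto
  then show ?thesis
    by (simp add: sum.inter_filter sum.cartesian_product case_prod_beta)
qed

lemma branch_weight_eq: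
  "branch_weight b p q k =
     (\<Sum>i<4. \<Sum>j<4. if (i = 0 \<or> j = 0 \<or> i = j) = b \<and> xor i j = k then p i * q j else 0)"
proof -
  have "{(i, j). i < 4 \<and> j < 4 \<and> pauli_commute i j = b \<and> pauli_prod_idx i j = k} =
        {(i, j). i < 4 \<and> j < 4 \<and> ((i = 0 \<or> j = 0 \<or> i = j) = b \<and> xor i j = k)}"
    using pauli_commute_iff pauli_prod_idx_eq_xor by auto
  then show ?thesis
    unfolding branch_weight_def by (simp add: sum_pairs_less_4)
qed

lemma branch_prob_eq:
  "branch_prob b p q = (\<Sum>i<4. \<Sum>j<4. if (i = 0 \<or> j = 0 \<or> i = j) = b then p i * q j else 0)"
proof -
  have "{(i, j). i < 4 \<and> j < 4 \<and> pauli_commute i j = b} =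
        {(i, j). i < 4 \<and> j < 4 \<and> (i = 0 \<or> j = 0 \<or> i = j) = b}"
    using pauli_commute_iff by auto
  then show ?thesis
    unfolding branch_prob_def by (simp add: sum_pairs_less_4)
qed

lemma sum_partition_xor_less_4:
  fixes f :: "nat \<Rightarrow> nat \<Rightarrow> 'a::comm_monoid_add"
  shows "(\<Sum>k<4. \<Sum>i<4. \<Sum>j<4. if P i j \<and> xor i j = k then f i j else 0) =
         (\<Sum>i<4. \<Sum>j<4. if P i j then f i j else 0)"
proof -
  have "(\<Sum>k<4. \<Sum>i<4. \<Sum>j<4. if P i j \<and> xor i j = k then f i j else 0) =
        (\<Sum>i<4. \<Sum>k<4. \<Sum>j<4. if P i j \<and> xor i j = k then f i j else 0)"
    by (rule sum.swap)
  also have "\<dots> = (\<Sum>i<4. \<Sum>j<4. \<Sum>k<4. if P i j \<and> xor i j = k then f i j else 0)"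
    by (intro sum.cong refl sum.swap)
  also have "\<dots> = (\<Sum>i<4. \<Sum>j<4. if P i j then f i j else 0)"
    by (intro sum.cong refl) (simp add: sum.delta xor_less_4 flip: if_distrib)
  finally show ?thesis .
qed

lemma branch_prob_eq_sum_branch_weight:
  "branch_prob b p q = (\<Sum>k<4. branch_weight b p q k)"
  unfolding branch_prob_eq branch_weight_eq by (rule sum_partition_xor_less_4[symmetric])

lemma branch_prob_True_plus_False:
  assumes "prob_vec4 p" "prob_vec4 q"
  shows "branch_prob True p q + branch_prob False p q = 1"
proof -
  have "branch_prob True p q + branch_prob False p q = (\<Sum>i<4. \<Sum>j<4. p i * q j)"
    unfolding branch_prob_eq sum.distrib[symmetric] by (intro sum.cong refl) auto
  also have "\<dots> = (\<Sum>i<4. p i) * (\<Sum>j<4. q j)"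
    by (simp add: sum_product)
  finally show ?thesis
    using assms by (simp add: prob_vec4_def)
qed

lemma branch_weight_nonneg:
  assumes "prob_vec4 p" "prob_vec4 q"
  shows "0 \<le> branch_weight b p q k"
  using assms unfolding branch_weight_def prob_vec4_def
  by (intro sum_nonneg) (auto simp: case_prod_beta)

lemma xlog2_div:
  assumes "0 < s" "0 \<le> w"
  shows "s * xlog2 (w / s) = xlog2 w - w * log 2 s"
  using assms by (cases "w = 0") (simp_all add: xlog2_def log_divide algebra_simps)

lemma scaled_C_E_eq:
  assumes nonneg: "\<And>k. k < 4 \<Longrightarrow> 0 \<le> w k" and total: "s = (\<Sum>k<4. w k)"
  shows "(if s = 0 then 0 else s * C_E (\<lambda>k. w k / s)) =
           2 * s + (\<Sum>k<4. xlog2 (w k)) - xlog2 s"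
proof (cases "s = 0")
  case True
  then have "\<forall>k<4. w k = 0"
    using nonneg total sum_nonneg_eq_0_iff[of "{..<4::nat}" w] by auto
  with True show ?thesis by (simp add: xlog2_def)
next
  case False
  with nonneg total have "0 < s"
    using sum_nonneg[of "{..<4::nat}" w] by force
  have "s * C_E (\<lambda>k. w k / s) = 2 * s + (\<Sum>k<4. s * xlog2 (w k / s))"
    by (simp add: C_E_def algebra_simps sum_distrib_left)
  also have "\<dots> = 2 * s + (\<Sum>k<4. xlog2 (w k) - w k * log 2 s)"
    using xlog2_div[OF \<open>0 < s\<close>] nonneg by simp
  also have "\<dots> = 2 * s + (\<Sum>k<4. xlog2 (w k)) - xlog2 s"
    using \<open>0 < s\<close> by (simp add: sum_subtractf total xlog2_def flip: sum_distrib_right)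
  finally show ?thesis
    using False by simp
qed

lemma branch_cap_eq:
  assumes "prob_vec4 p" "prob_vec4 q"
  shows "branch_cap b p q =
           2 * branch_prob b p q + (\<Sum>k<4. xlog2 (branch_weight b p q k))
             - xlog2 (branch_prob b p q)"
  unfolding branch_cap_def branch_channel_def
  by (rule scaled_C_E_eq[OF branch_weight_nonneg[OF assms] branch_prob_eq_sum_branch_weight])

lemma C_EQ_eq:
  assumes "prob_vec4 p" "prob_vec4 q"
  shows "C_EQ p q = 2 + bin_entropy (branch_prob True p q)
           + (\<Sum>k<4. xlog2 (branch_weight True p q k))
           + (\<Sum>k<4. xlog2 (branch_weight False p q k))"
proof -
  have "branch_prob False p q = 1 - branch_prob True p q"
    using branch_prob_True_plus_False[OF assms] by simp
  then show ?thesis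
    unfolding C_EQ_def branch_cap_eq[OF assms] bin_entropy_def by simp
qed

theorem corollary8:
  fixes p q :: "nat \<Rightarrow> real"
  assumes "prob_vec4 p" and "prob_vec4 q"
  defines "A0 \<equiv> p 0 * q 0 + p 1 * q 1 + p 2 * q 2 + p 3 * q 3"
      and "A1p \<equiv> p 0 * q 1 + p 1 * q 0"
      and "A2p \<equiv> p 0 * q 2 + p 2 * q 0"
      and "A3p \<equiv> p 0 * q 3 + p 3 * q 0"
      and "A1m \<equiv> p 2 * q 3 + p 3 * q 2"
      and "A2m \<equiv> p 3 * q 1 + p 1 * q 3"
      and "A3m \<equiv> p 1 * q 2 + p 2 * q 1"
  shows "Q_EQ p q = C_EQ p q / 2 \<and>
         Q_EQ p q = 1 + (1/2) * (bin_entropy (A0 + A1p + A2p + A3p) + xlog2 A0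
                      + xlog2 A1p + xlog2 A2p + xlog2 A3p
                      + xlog2 A1m + xlog2 A2m + xlog2 A3m)"
proof -
  have weights_plus: "branch_weight True p q 0 = A0" "branch_weight True p q 1 = A1p"
    "branch_weight True p q 2 = A2p" "branch_weight True p q 3 = A3p"
    unfolding branch_weight_eq A0_def A1p_def A2p_def A3p_def
    by (simp_all add: lessThan_nat_numeral)
  have weights_minus: "branch_weight False p q 0 = 0" "branch_weight False p q 1 = A1m"
    "branch_weight False p q 2 = A2m" "branch_weight False p q 3 = A3m"
    unfolding branch_weight_eq A1m_def A2m_def A3m_def
    by (simp_all add: lessThan_nat_numeral)
  have prob_plus: "branch_prob True p q = A0 + A1p + A2p + A3p"
    by (simp only: branch_prob_eq_sum_branch_weight sum_lessThan_4 weights_plus)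
  have "xlog2 0 = 0"
    by (simp add: xlog2_def)
  then show ?thesis
    unfolding Q_EQ_def C_EQ_eq[OF assms(1,2)] sum_lessThan_4 weights_plus weights_minus prob_plus
    by simp
qed

end
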